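(* Let $\mathcal{G}=(\mathcal{N},\mathcal{E})$ be a finite, undirected, connected graph, let $\mathcal{M}_1,\dots,\mathcal{M}_m$ be a non-overlapping partition of $\mathcal{N}$ into nonempty sets, let $h\ge 1$ and let real numbers $a_{i,\ell}$ ($i\in\mathcal{N}$, $\ell=1,\dots,h$) be given. Run the coalition formation procedure described in the context for $m-1$ iterations. Then either every resulting coalition $\mathcal{C}_p^{(m-1)}$, $p=1,\dots,m$, is self-sufficient, or $\mathcal{C}_p^{(m-1)}=\mathcal{N}$ for all $p=1,\dots,m$.
   Context: For $S\subseteq\mathcal{N}$ and $\ell\in\{1,\dots,h\}$ define the local imbalance $\Delta_{S,\ell}=\sum_{i\in S}a_{i,\ell}$ (in the application, $a_{i,\ell}=-\bar u^{\mathrm g}_i+\hat d_{i,\ell}+\bar w_i^{\mathrm d}$: maximum dispatchable generation subtracted from worst-case net load). $S$ is self-sufficient if $\Delta_{S,\ell}\le 0$ for all $\ell=1,\dots,h$. Coalition formation procedure: initially $\mathcal{C}_p^{(0)}=\mathcal{M}_p$ for each $p$. At every iteration the coalitions form a partition of $\mathcal{N}$ into unions of the $\mathcal{M}_p$ (each $\mathcal{M}_p$ belongs to the coalition $\mathcal{C}_p^{(r)}$, and two indices $p,q$ either have identical or disjoint coalitions). At iteration $r$ ($0\le r<m-1$): if all coalitions are self-sufficient, nothing changes. Otherwise, each coalition $\mathcal{C}$ that is not self-sufficient and has an adjacent coalition (a distinct coalition containing a node adjacent in $\mathcal{G}$ to a node of $\mathcal{C}$) requests a merger; an adjacent coalition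 $\mathcal{C}'$ that is not already engaged with another coalition in this iteration responds with $J^{\mathrm{cim}}=\sum_{\ell=1}^h\max(0,\Delta_{\mathcal{C}',\ell}+\Delta_{\mathcal{C},\ell})$ (an engaged one responds $+\infty$), and $\mathcal{C}$ merges (takes the union) with a responding adjacent coalition minimizing $J^{\mathrm{cim}}$ among finite values, all members of both coalitions updating their coalition to the union. Each coalition participates in at most one merger per iteration, and in every iteration in which some coalition is not self-sufficient and has an adjacent coalition, at least one merger takes place. *)

theory Defs
  imports Complex_Main
begin

definition imbalance :: "('n \<Rightarrow> nat \<Rightarrow> real) \<Rightarrow> 'n set \<Rightarrow> nat \<Rightarrow> real" where
  "imbalance a S l = (\<Sum>i\<in>S. a i l)"

definition self_sufficient :: "('n \<Rightarrow> nat \<Rightarrow> real) \<Rightarrow> nat \<Rightarrow> 'n set \<Rightarrow> bool" where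
  "self_sufficient a h S \<longleftrightarrow> (\<forall>l\<in>{1..h}. imbalance a S l \<le> 0)"

definition adjacent_coal :: "('n \<Rightarrow> 'n \<Rightarrow> bool) \<Rightarrow> 'n set \<Rightarrow> 'n set \<Rightarrow> bool" where
  "adjacent_coal E S T \<longleftrightarrow> S \<noteq> T \<and> (\<exists>i\<in>S. \<exists>j\<in>T. E i j)"

definition J_cim :: "('n \<Rightarrow> nat \<Rightarrow> real) \<Rightarrow> nat \<Rightarrow> 'n set \<Rightarrow> 'n set \<Rightarrow> real" where
  "J_cim a h S T = (\<Sum>l=1..h. max 0 (imbalance a T l + imbalance a S l))"

definition engaged :: "('n set \<times> 'n set) list \<Rightarrow> 'n set set" where
  "engaged evs = fst ` set evs \<union> snd ` set evs"

text \<open>The mergers of the iteration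
  are recorded as a list evs of (requesting coalition, responding coalition) pairs, in the
  order in which they happen; a coalition is engaged once it occurs in an earlier merger.\<close>
definition iteration_step ::
  "('n \<Rightarrow> 'n \<Rightarrow> bool) \<Rightarrow> ('n \<Rightarrow> nat \<Rightarrow> real) \<Rightarrow> nat \<Rightarrow> nat
     \<Rightarrow> (nat \<Rightarrow> 'n set) \<Rightarrow> (nat \<Rightarrow> 'n set) \<Rightarrow> bool" where
  "iteration_step E a h m Cs Cs' \<longleftrightarrow>
     (let Coal = Cs ` {1..m} in
      if (\<forall>S\<in>Coal. self_sufficient a h S) then (\<forall>p\<in>{1..m}. Cs' p = Cs p)
      else (\<exists>evs :: ('n set \<times> 'n set) list.
        (\<forall>k<length evs. let S = fst (evs ! k); T = snd (evs ! k) in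
            S \<in> Coal \<and> T \<in> Coal \<and> \<not> self_sufficient a h S \<and> adjacent_coal E S T \<and>
            S \<notin> engaged (take k evs) \<and> T \<notin> engaged (take k evs) \<and>
            (\<forall>T'\<in>Coal. adjacent_coal E S T' \<and> T' \<notin> engaged (take k evs)
                 \<longrightarrow> J_cim a h S T \<le> J_cim a h S T')) \<and>
        ((\<exists>S\<in>Coal. \<not> self_sufficient a h S \<and> (\<exists>T\<in>Coal. adjacent_coal E S T)) \<longrightarrow> evs \<noteq> []) \<and>
        (\<forall>ST\<in>set evs. \<forall>p\<in>{1..m}. Cs p = fst ST \<or> Cs p = snd ST \<longrightarrow> Cs' p = fst ST \<union> snd ST) \<and>
        (\<forall>p\<in>{1..m}. Cs p \<notin> engaged evs \<longrightarrow> Cs' p = Cs p)))"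

end

theory Submission
  imports Defs
begin

text \<open>Every iteration in which the procedure has not yet settled merges at least two distinct
  coalitions, and an iteration only takes unions of coalitions, so the number of distinct
  coalitions strictly decreases.  Connectivity guarantees that, as long as some coalition is
  not all of \<open>N\<close>, every coalition has an adjacent one.  Starting from at most \<open>m\<close> coalitions,
  after \<open>m - 1\<close> unsettled iterations a single coalition is left, and it covers \<open>N\<close>.\<close>

definition coalition_cover :: "'n set \<Rightarrow> nat \<Rightarrow> (nat \<Rightarrow> 'n set) \<Rightarrow> bool" where
  "coalition_cover N m Cs \<longleftrightarrow> (\<forall>p\<in>{1..m}. Cs p \<noteq> {}) \<and> (\<Union>p\<in>{1..m}. Cs p) = N"

definition settled ::
  "('n \<Rightarrow> nat \<Rightarrow> real) \<Rightarrow> nat \<Rightarrow> 'n set \<Rightarrow> nat \<Rightarrow> (nat \<Rightarrow> 'n set) \<Rightarrow> bool" where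
  "settled a h N m Cs \<longleftrightarrow>
     (\<forall>p\<in>{1..m}. self_sufficient a h (Cs p)) \<or> (\<forall>p\<in>{1..m}. Cs p = N)"

lemma rtranclp_leaves_set:
  assumes "E\<^sup>*\<^sup>* i j" "i \<in> X" "j \<notin> X"
  obtains x y where "x \<in> X" "y \<notin> X" "E x y"
  using assms by (induction rule: rtranclp_induct) blast+

lemma connected_proper_subset_edge_out:
  assumes E_in: "\<And>i j. E i j \<Longrightarrow> i \<in> N \<and> j \<in> N"
    and connected: "\<forall>i\<in>N. \<forall>j\<in>N. E\<^sup>*\<^sup>* i j"
    and "X \<subseteq> N" "X \<noteq> {}" "X \<noteq> N"
  obtains x y where "x \<in> X" "y \<in> N" "y \<notin> X" "E x y"
proof -
  obtain i j where "i \<in> X" "j \<in> N" "j \<notin> X" using assms(3-5) by blast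
  with connected assms(3) have "E\<^sup>*\<^sup>* i j" by blast
  then obtain x y where "x \<in> X" "y \<notin> X" "E x y"
    using \<open>i \<in> X\<close> \<open>j \<notin> X\<close> by (rule rtranclp_leaves_set)
  with E_in that show thesis by blast
qed

lemma exists_adjacent_coalition:
  assumes cover: "coalition_cover N m Cs"
    and E_in: "\<And>i j. E i j \<Longrightarrow> i \<in> N \<and> j \<in> N"
    and E_sym: "\<And>i j. E i j \<Longrightarrow> E j i"
    and connected: "\<forall>i\<in>N. \<forall>j\<in>N. E\<^sup>*\<^sup>* i j"
    and p: "p \<in> {1..m}" and q: "q \<in> {1..m}" and proper: "Cs q \<noteq> N"
  shows "\<exists>T\<in>Cs ` {1..m}. adjacent_coal E (Cs p) T"
proof (cases "Cs p = N")
  case False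
  have "Cs p \<subseteq> N" "Cs p \<noteq> {}" using cover p unfolding coalition_cover_def by auto
  then obtain x y where "x \<in> Cs p" "y \<in> N" "y \<notin> Cs p" "E x y"
    using connected_proper_subset_edge_out[OF E_in connected] False by metis
  moreover obtain q' where "q' \<in> {1..m}" "y \<in> Cs q'"
    using cover \<open>y \<in> N\<close> unfolding coalition_cover_def by blast
  ultimately show ?thesis unfolding adjacent_coal_def by blast
next
  case True
  have "Cs q \<subseteq> N" "Cs q \<noteq> {}" using cover q unfolding coalition_cover_def by auto
  then obtain x y where "x \<in> Cs q" "y \<in> N" "y \<notin> Cs q" "E x y"
    using connected_proper_subset_edge_out[OF E_in connected] proper by metis
  then have "adjacent_coal E (Cs p) (Cs q)"
    using True E_sym unfolding adjacent_coal_def by blast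
  then show ?thesis using q by blast
qed

lemma iteration_step_unchanged_if_self_sufficient:
  assumes "iteration_step E a h m Cs Cs'" "\<forall>S\<in>Cs ` {1..m}. self_sufficient a h S"
    and "p \<in> {1..m}"
  shows "Cs' p = Cs p"
  using assms unfolding iteration_step_def Let_def by auto

lemma iteration_step_mergers:
  fixes Cs Cs' :: "nat \<Rightarrow> 'n set"
  assumes "iteration_step E a h m Cs Cs'" "\<not> (\<forall>S\<in>Cs ` {1..m}. self_sufficient a h S)"
  obtains evs where
    "\<And>S T. (S, T) \<in> set evs \<Longrightarrow> S \<in> Cs ` {1..m} \<and> T \<in> Cs ` {1..m} \<and> adjacent_coal E S T"
    "(\<exists>S\<in>Cs ` {1..m}. \<not> self_sufficient a h S \<and> (\<exists>T\<in>Cs ` {1..m}. adjacent_coal E S T))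
       \<Longrightarrow> evs \<noteq> []"
    "\<And>S T p. (S, T) \<in> set evs \<Longrightarrow> p \<in> {1..m} \<Longrightarrow> Cs p = S \<or> Cs p = T \<Longrightarrow> Cs' p = S \<union> T"
    "\<And>p. p \<in> {1..m} \<Longrightarrow> Cs p \<notin> engaged evs \<Longrightarrow> Cs' p = Cs p"
proof -
  let ?Coal = "Cs ` {1..m}"
  obtain evs :: "('n set \<times> 'n set) list" where
    pairs: "\<forall>k<length evs. fst (evs ! k) \<in> ?Coal \<and> snd (evs ! k) \<in> ?Coal
        \<and> \<not> self_sufficient a h (fst (evs ! k)) \<and> adjacent_coal E (fst (evs ! k)) (snd (evs ! k))
        \<and> fst (evs ! k) \<notin> engaged (take k evs) \<and> snd (evs ! k) \<notin> engaged (take k evs)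
        \<and> (\<forall>T'\<in>?Coal. adjacent_coal E (fst (evs ! k)) T' \<and> T' \<notin> engaged (take k evs)
               \<longrightarrow> J_cim a h (fst (evs ! k)) (snd (evs ! k)) \<le> J_cim a h (fst (evs ! k)) T')"
    and rest: "(\<exists>S\<in>?Coal. \<not> self_sufficient a h S \<and> (\<exists>T\<in>?Coal. adjacent_coal E S T))
          \<longrightarrow> evs \<noteq> []"
      "\<forall>ST\<in>set evs. \<forall>p\<in>{1..m}. Cs p = fst ST \<or> Cs p = snd ST \<longrightarrow> Cs' p = fst ST \<union> snd ST"
      "\<forall>p\<in>{1..m}. Cs p \<notin> engaged evs \<longrightarrow> Cs' p = Cs p"
    using assms(1) unfolding iteration_step_def Let_def if_not_P[OF assms(2)]
    by (elim exE conjE) (rule that)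
  show thesis
  proof (rule that)
    fix S T assume "(S, T) \<in> set evs"
    then obtain k where "k < length evs" "evs ! k = (S, T)" by (auto simp: in_set_conv_nth)
    with pairs[rule_format, OF \<open>k < length evs\<close>]
    show "S \<in> Cs ` {1..m} \<and> T \<in> Cs ` {1..m} \<and> adjacent_coal E S T" by simp
  next
    fix S T p assume "(S, T) \<in> set evs" "p \<in> {1..m}" "Cs p = S \<or> Cs p = T"
    with rest(2) show "Cs' p = S \<union> T" by fastforce
  qed (use rest(1,3) in blast)+
qed

lemma iteration_step_respects_coalitions:
  assumes step: "iteration_step E a h m Cs Cs'"
    and p: "p \<in> {1..m}" and q: "q \<in> {1..m}" and same: "Cs p = Cs q"
  shows "Cs' p = Cs' q"
proof (cases "\<forall>S\<in>Cs ` {1..m}. self_sufficient a h S")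
  case True
  with iteration_step_unchanged_if_self_sufficient[OF step] p q same show ?thesis by metis
next
  case False
  then obtain evs where
    merged: "\<And>S T p. (S, T) \<in> set evs \<Longrightarrow> p \<in> {1..m} \<Longrightarrow> Cs p = S \<or> Cs p = T \<Longrightarrow> Cs' p = S \<union> T"
    and kept: "\<And>p. p \<in> {1..m} \<Longrightarrow> Cs p \<notin> engaged evs \<Longrightarrow> Cs' p = Cs p"
    by (rule iteration_step_mergers[OF step]) blast+
  show ?thesis
  proof (cases "Cs p \<in> engaged evs")
    case True
    then obtain S T where "(S, T) \<in> set evs" "Cs p = S \<or> Cs p = T"
      unfolding engaged_def by force
    with merged p q same show ?thesis by metis
  qed (use kept p q same in metis)
qed

lemma iteration_step_extends_coalitions:
  assumes step: "iteration_step E a h m Cs Cs'" and p: "p \<in> {1..m}"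
  shows "Cs p \<subseteq> Cs' p" "Cs' p \<subseteq> (\<Union>q\<in>{1..m}. Cs q)"
proof -
  have "Cs p \<subseteq> Cs' p \<and> Cs' p \<subseteq> (\<Union>q\<in>{1..m}. Cs q)"
  proof (cases "\<forall>S\<in>Cs ` {1..m}. self_sufficient a h S")
    case True
    with iteration_step_unchanged_if_self_sufficient[OF step] p show ?thesis by auto
  next
    case False
    then obtain evs where
      pairs: "\<And>S T. (S, T) \<in> set evs \<Longrightarrow> S \<in> Cs ` {1..m} \<and> T \<in> Cs ` {1..m} \<and> adjacent_coal E S T"
      and merged: "\<And>S T p. (S, T) \<in> set evs \<Longrightarrow> p \<in> {1..m} \<Longrightarrow> Cs p = S \<or> Cs p = T \<Longrightarrow> Cs' p = S \<union> T"
      and kept: "\<And>p. p \<in> {1..m} \<Longrightarrow> Cs p \<notin> engaged evs \<Longrightarrow> Cs' p = Cs p"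
      by (rule iteration_step_mergers[OF step]) blast
    show ?thesis
    proof (cases "Cs p \<in> engaged evs")
      case True
      then obtain S T where ST: "(S, T) \<in> set evs" "Cs p = S \<or> Cs p = T"
        unfolding engaged_def by force
      with merged[OF ST(1) p] pairs[OF ST(1)] show ?thesis by auto
    qed (use kept p in auto)
  qed
  then show "Cs p \<subseteq> Cs' p" "Cs' p \<subseteq> (\<Union>q\<in>{1..m}. Cs q)" by auto
qed

lemma iteration_step_preserves_cover:
  assumes "iteration_step E a h m Cs Cs'" "coalition_cover N m Cs"
  shows "coalition_cover N m Cs'"
proof -
  note grows = iteration_step_extends_coalitions[OF assms(1)]
  have "(\<Union>p\<in>{1..m}. Cs' p) \<subseteq> (\<Union>p\<in>{1..m}. Cs p)" using grows(2) by (rule UN_least)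
  moreover have "(\<Union>p\<in>{1..m}. Cs p) \<subseteq> (\<Union>p\<in>{1..m}. Cs' p)" using grows(1) by (rule UN_mono[OF order_refl])
  ultimately show ?thesis using grows(1) assms(2) unfolding coalition_cover_def by blast
qed

text \<open>Once every coalition is \<open>N\<close>, no two coalitions are adjacent, so no merger can take place.\<close>

lemma iteration_step_unchanged_if_settled:
  assumes step: "iteration_step E a h m Cs Cs'" and "settled a h N m Cs" and p: "p \<in> {1..m}"
  shows "Cs' p = Cs p"
proof (cases "\<forall>S\<in>Cs ` {1..m}. self_sufficient a h S")
  case True
  with iteration_step_unchanged_if_self_sufficient[OF step] p show ?thesis by blast
next
  case False
  with \<open>settled a h N m Cs\<close> have all_N: "\<forall>q\<in>{1..m}. Cs q = N"
    unfolding settled_def by blast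
  obtain evs where
    pairs: "\<And>S T. (S, T) \<in> set evs \<Longrightarrow> S \<in> Cs ` {1..m} \<and> T \<in> Cs ` {1..m} \<and> adjacent_coal E S T"
    and kept: "\<And>p. p \<in> {1..m} \<Longrightarrow> Cs p \<notin> engaged evs \<Longrightarrow> Cs' p = Cs p"
    by (rule iteration_step_mergers[OF step False]) blast+
  have "evs = []"
  proof (rule ccontr)
    assume "evs \<noteq> []"
    then obtain S T where "(S, T) \<in> set evs" by (cases evs) auto
    then have "S \<in> Cs ` {1..m}" "T \<in> Cs ` {1..m}" "S \<noteq> T"
      using pairs unfolding adjacent_coal_def by blast+
    with all_N show False by blast
  qed
  with kept p show ?thesis unfolding engaged_def by simp
qed

lemma card_image_less_if_coarser:
  assumes "finite A"
    and coarser: "\<And>p q. p \<in> A \<Longrightarrow> q \<in> A \<Longrightarrow> g p = g q \<Longrightarrow> f p = f q"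
    and "p \<in> A" "q \<in> A" "g p \<noteq> g q" "f p = f q"
  shows "card (f ` A) < card (g ` A)"
proof -
  define \<phi> where "\<phi> X = f (SOME p. p \<in> A \<and> g p = X)" for X
  have factor: "f p = \<phi> (g p)" if "p \<in> A" for p
  proof -
    have "(SOME q. q \<in> A \<and> g q = g p) \<in> A \<and> g (SOME q. q \<in> A \<and> g q = g p) = g p"
      using someI[of "\<lambda>q. q \<in> A \<and> g q = g p" p] that by blast
    with coarser that show ?thesis unfolding \<phi>_def by metis
  qed
  then have "f ` A = \<phi> ` g ` A" by (auto simp: image_iff)
  moreover have "\<not> inj_on \<phi> (g ` A)"
    using factor assms(3-6) unfolding inj_on_def by auto
  ultimately show ?thesis
    using \<open>finite A\<close> by (metis card_image_le finite_imageI inj_on_iff_eq_card le_neq_implies_less)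
qed

lemma iteration_step_card_less:
  assumes step: "iteration_step E a h m Cs Cs'"
    and S: "S \<in> Cs ` {1..m}" "\<not> self_sufficient a h S"
    and T: "T \<in> Cs ` {1..m}" "adjacent_coal E S T"
  shows "card (Cs' ` {1..m}) < card (Cs ` {1..m})"
proof -
  have "\<not> (\<forall>S\<in>Cs ` {1..m}. self_sufficient a h S)" using S by blast
  then obtain evs where
    pairs: "\<And>S T. (S, T) \<in> set evs \<Longrightarrow> S \<in> Cs ` {1..m} \<and> T \<in> Cs ` {1..m} \<and> adjacent_coal E S T"
    and nonempty: "(\<exists>S\<in>Cs ` {1..m}. \<not> self_sufficient a h S \<and> (\<exists>T\<in>Cs ` {1..m}. adjacent_coal E S T))
       \<Longrightarrow> evs \<noteq> []"
    and merged: "\<And>S T p. (S, T) \<in> set evs \<Longrightarrow> p \<in> {1..m} \<Longrightarrow> Cs p = S \<or> Cs p = T \<Longrightarrow> Cs' p = S \<union> T"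
    by (rule iteration_step_mergers[OF step]) blast
  from nonempty S T have "evs \<noteq> []" by blast
  then obtain S' T' where first: "(S', T') \<in> set evs" by (cases evs) auto
  with pairs obtain p q where pq: "p \<in> {1..m}" "q \<in> {1..m}" "Cs p = S'" "Cs q = T'" "S' \<noteq> T'"
    unfolding adjacent_coal_def by blast
  have "Cs' p = Cs' q" using merged[OF first] pq by metis
  show ?thesis
  proof (rule card_image_less_if_coarser[of "{1..m}" Cs Cs' p q])
    show "Cs' p' = Cs' q'" if "p' \<in> {1..m}" "q' \<in> {1..m}" "Cs p' = Cs q'" for p' q'
      using iteration_step_respects_coalitions[OF step that] .
  qed (use pq \<open>Cs' p = Cs' q\<close> in simp_all)
qed

lemma unsettled_iteration_card_less:
  assumes step: "iteration_step E a h m Cs Cs'"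
    and cover: "coalition_cover N m Cs" and unsettled: "\<not> settled a h N m Cs"
    and E_in: "\<And>i j. E i j \<Longrightarrow> i \<in> N \<and> j \<in> N"
    and E_sym: "\<And>i j. E i j \<Longrightarrow> E j i"
    and connected: "\<forall>i\<in>N. \<forall>j\<in>N. E\<^sup>*\<^sup>* i j"
  shows "card (Cs' ` {1..m}) < card (Cs ` {1..m})"
proof -
  obtain p q where p: "p \<in> {1..m}" "\<not> self_sufficient a h (Cs p)"
    and q: "q \<in> {1..m}" "Cs q \<noteq> N"
    using unsettled unfolding settled_def by blast
  obtain T where "T \<in> Cs ` {1..m}" "adjacent_coal E (Cs p) T"
    using exists_adjacent_coalition[OF cover E_in E_sym connected p(1) q] by blast
  with p show ?thesis by (intro iteration_step_card_less[OF step]) auto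
qed

lemma coalitions_after_iterations:
  assumes E_in: "\<And>i j. E i j \<Longrightarrow> i \<in> N \<and> j \<in> N"
    and E_sym: "\<And>i j. E i j \<Longrightarrow> E j i"
    and connected: "\<forall>i\<in>N. \<forall>j\<in>N. E\<^sup>*\<^sup>* i j"
    and cover: "coalition_cover N m (C 0)"
    and steps: "\<forall>r<k. iteration_step E a h m (C r) (C (Suc r))"
  shows "coalition_cover N m (C k) \<and> (settled a h N m (C k) \<or> card (C k ` {1..m}) + k \<le> m)"
  using steps
proof (induction k)
  case 0
  have "card (C 0 ` {1..m}) \<le> m" using card_image_le[of "{1..m}" "C 0"] by simp
  with cover show ?case by simp
next
  case (Suc k)
  then have step: "iteration_step E a h m (C k) (C (Suc k))"
    and IH: "coalition_cover N m (C k)" "settled a h N m (C k) \<or> card (C k ` {1..m}) + k \<le> m"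
    by auto
  have "settled a h N m (C (Suc k))" if "settled a h N m (C k)"
    using that iteration_step_unchanged_if_settled[OF step that] unfolding settled_def by simp
  moreover have "card (C (Suc k) ` {1..m}) < card (C k ` {1..m})" if "\<not> settled a h N m (C k)"
    using unsettled_iteration_card_less[OF step IH(1) that E_in E_sym connected] .
  ultimately show ?case
    using IH iteration_step_preserves_cover[OF step] by fastforce
qed

lemma coalition_cover_single:
  assumes "coalition_cover N m Cs" "m \<ge> 1" "card (Cs ` {1..m}) \<le> 1" "p \<in> {1..m}"
  shows "Cs p = N"
proof -
  have "Cs ` {1..m} \<noteq> {}" using \<open>m \<ge> 1\<close> by auto
  with assms(3) obtain X where "Cs ` {1..m} = {X}"
    by (metis card_0_eq card_1_singletonE finite_atLeastAtMost finite_imageI le_antisym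
        less_one not_le)
  with assms(1,4) show ?thesis unfolding coalition_cover_def by auto
qed

theorem proposition2:
  fixes N :: "'n set" and E :: "'n \<Rightarrow> 'n \<Rightarrow> bool"
    and m h :: nat and M :: "nat \<Rightarrow> 'n set"
    and a :: "'n \<Rightarrow> nat \<Rightarrow> real" and C :: "nat \<Rightarrow> nat \<Rightarrow> 'n set"
  assumes finN: "finite N"
    and E_in: "\<And>i j. E i j \<Longrightarrow> i \<in> N \<and> j \<in> N"
    and E_sym: "\<And>i j. E i j \<Longrightarrow> E j i"
    and connected: "\<forall>i\<in>N. \<forall>j\<in>N. E\<^sup>*\<^sup>* i j"
    and M_nonempty: "\<forall>p\<in>{1..m}. M p \<noteq> {}"
    and M_disjoint: "\<forall>p\<in>{1..m}. \<forall>q\<in>{1..m}. p \<noteq> q \<longrightarrow> M p \<inter> M q = {}"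
    and M_cover: "(\<Union>p\<in>{1..m}. M p) = N"
    and h_pos: "h \<ge> 1"
    and C_init: "\<forall>p\<in>{1..m}. C 0 p = M p"
    and C_step: "\<forall>r<m - 1. iteration_step E a h m (C r) (C (Suc r))"
  shows "(\<forall>p\<in>{1..m}. self_sufficient a h (C (m - 1) p)) \<or> (\<forall>p\<in>{1..m}. C (m - 1) p = N)"
proof -
  have "coalition_cover N m (C 0)"
    using C_init M_nonempty M_cover unfolding coalition_cover_def by simp
  with coalitions_after_iterations[OF E_in E_sym connected _ C_step]
  have cover: "coalition_cover N m (C (m - 1))"
    and count: "settled a h N m (C (m - 1)) \<or> card (C (m - 1) ` {1..m}) + (m - 1) \<le> m"
    by auto
  show ?thesis
  proof (cases "settled a h N m (C (m - 1))")
    case False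
    then have "m \<ge> 1" unfolding settled_def by auto
    with False count have "card (C (m - 1) ` {1..m}) \<le> 1" by simp
    with coalition_cover_single[OF cover \<open>m \<ge> 1\<close>] show ?thesis by blast
  qed (simp add: settled_def)
qed

end
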